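(* Let $q\ge2$ and $\mu,R>0$. There is no sequence of $l_i$-shot ID codes for $\Pi^q_{n_i}$, $i=1,2,\dots$, with $n_i\to\infty$, $l_i/n_i\to0$, $M_i\ge 2^{R n_i^{l_i(q-1)}}$ messages, and type-I and type-II error probabilities satisfying $\lambda_{1,i}<n_i^{-l_i\mu}$ and $\lambda_{2,i}<n_i^{-l_i\mu}$ for all $i$.
   Context: Fix an integer $q\ge 2$ and let $\mathcal A_q=\{1,\dots,q\}$. For $n\ge1$ and $\sigma\in S_n$ (the symmetric group on $\{1,\dots,n\}$), $\sigma\mathbf x=(x_{\sigma^{-1}(1)},\dots,x_{\sigma^{-1}(n)})$ for $\mathbf x\in\mathcal A_q^n$. The $n$-block $q$-ary uniform permutation channel $\Pi^q_n$ has input/output alphabet $\mathcal A_q^n$ and $\Pi^q_n(\mathbf y\mid\mathbf x)=\frac1{n!}\sum_{\sigma\in S_n}\mathbf 1\{\mathbf y=\sigma\mathbf x\}$. Using it $l$ times (independently on each block) gives the channel $W^{(l)}$ on $(\mathcal A_q^n)^l$ with $W^{(l)}(\mathbf y^{(1)},\dots,\mathbf y^{(l)}\mid \mathbf x^{(1)},\dots,\mathbf x^{(l)})=\prod_{s=1}^l\Pi^q_n(\mathbf y^{(s)}\mid\mathbf x^{(s)})$. An $l$-shot ID code with $M$ messages for $\Pi^q_n$ (an "$(n,l,M,\lambda_1,\lambda_2)$ ID code") is a family $\{(Q_i,\mathcal D_i)\}_{i=1}^M$ with $Q_i$ a probability distribution on $(\mathcal A_q^n)^l$ and $\mathcal D_i\subseteq(\mathcal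 A_q^n)^l$; its error probabilities are $\lambda_{i\to j}=\sum_{\underline{\mathbf x}}Q_i(\underline{\mathbf x})\sum_{\underline{\mathbf y}\in\mathcal D_j}W^{(l)}(\underline{\mathbf y}\mid\underline{\mathbf x})$ ($i\neq j$), $\lambda_{i\not\to i}=\sum_{\underline{\mathbf x}}Q_i(\underline{\mathbf x})\sum_{\underline{\mathbf y}\notin\mathcal D_i}W^{(l)}(\underline{\mathbf y}\mid\underline{\mathbf x})$, type-I error probability $\lambda_1=\max_i\lambda_{i\not\to i}$, type-II error probability $\lambda_2=\max_{i\ne j}\lambda_{i\to j}$. *)

theory Defs
  imports "HOL-Analysis.Analysis" "HOL-Combinatorics.Permutations"
begin

text \<open>Words of length n over the alphabet {1..q}, represented as lists
  (position k of the list is coordinate k+1 of the word).\<close>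
definition words :: "nat \<Rightarrow> nat \<Rightarrow> nat list set" where
  "words q n = {x. length x = n \<and> set x \<subseteq> {1..q}}"

definition blocks :: "nat \<Rightarrow> nat \<Rightarrow> nat \<Rightarrow> nat list list set" where
  "blocks q n l = {xs. length xs = l \<and> (\<forall>x\<in>set xs. x \<in> words q n)}"

definition perm_word :: "(nat \<Rightarrow> nat) \<Rightarrow> nat list \<Rightarrow> nat list" where
  "perm_word \<sigma> x = map (\<lambda>k. x ! inv \<sigma> k) [0..<length x]"

definition perm_channel :: "nat \<Rightarrow> nat list \<Rightarrow> nat list \<Rightarrow> real" where
  "perm_channel n y x =
     real (card {\<sigma>. \<sigma> permutes {..<n} \<and> y = perm_word \<sigma> x}) / fact n"

definition prod_channel :: "nat \<Rightarrow> nat \<Rightarrow> nat list list \<Rightarrow> nat list list \<Rightarrow> real" where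
  "prod_channel n l ys xs = (\<Prod>s<l. perm_channel n (ys ! s) (xs ! s))"

definition is_ID_code ::
  "nat \<Rightarrow> nat \<Rightarrow> nat \<Rightarrow> nat \<Rightarrow> (nat \<Rightarrow> nat list list \<Rightarrow> real) \<Rightarrow> (nat \<Rightarrow> nat list list set) \<Rightarrow> bool" where
  "is_ID_code q n l M Q D \<longleftrightarrow> n \<ge> 1 \<and> l \<ge> 1 \<and> M \<ge> 1 \<and>
     (\<forall>i<M. (\<forall>xs\<in>blocks q n l. Q i xs \<ge> 0) \<and> (\<Sum>xs\<in>blocks q n l. Q i xs) = 1
            \<and> D i \<subseteq> blocks q n l)"

definition err_to ::
  "nat \<Rightarrow> nat \<Rightarrow> nat \<Rightarrow> (nat \<Rightarrow> nat list list \<Rightarrow> real) \<Rightarrow> (nat \<Rightarrow> nat list list set) \<Rightarrow> nat \<Rightarrow> nat \<Rightarrow> real" where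
  "err_to q n l Q D i j =
     (\<Sum>xs\<in>blocks q n l. Q i xs * (\<Sum>ys\<in>D j. prod_channel n l ys xs))"

definition err_not_to ::
  "nat \<Rightarrow> nat \<Rightarrow> nat \<Rightarrow> (nat \<Rightarrow> nat list list \<Rightarrow> real) \<Rightarrow> (nat \<Rightarrow> nat list list set) \<Rightarrow> nat \<Rightarrow> real" where
  "err_not_to q n l Q D i =
     (\<Sum>xs\<in>blocks q n l. Q i xs * (\<Sum>ys\<in>blocks q n l - D i. prod_channel n l ys xs))"

definition type1_err ::
  "nat \<Rightarrow> nat \<Rightarrow> nat \<Rightarrow> nat \<Rightarrow> (nat \<Rightarrow> nat list list \<Rightarrow> real) \<Rightarrow> (nat \<Rightarrow> nat list list set) \<Rightarrow> real" where
  "type1_err q n l M Q D = Max {err_not_to q n l Q D i | i. i < M}"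

definition type2_err ::
  "nat \<Rightarrow> nat \<Rightarrow> nat \<Rightarrow> nat \<Rightarrow> (nat \<Rightarrow> nat list list \<Rightarrow> real) \<Rightarrow> (nat \<Rightarrow> nat list list set) \<Rightarrow> real" where
  "type2_err q n l M Q D = Max {err_to q n l Q D i j | i j. i < M \<and> j < M \<and> i \<noteq> j}"

end

theory Submission
  imports Defs "HOL-Real_Asymp.Real_Asymp"
begin

text \<open>
  The channel only reorders the symbols inside each block, so every output distribution is
  constant on type classes (outputs with the same multiset of symbols in every block), and there
  are at most K = (n+1)^(l(q-1)) types. Deciding for message j on a type whose class is at least
  half covered by D_j turns an ID code into one on types whose error probabilities are at most
  2 lambda. Now draw s types independently from the output distribution of message i: all of them
  lie in its own decision set with probability at least (1 - 2 lambda)^s, and all of them lie in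
  the decision set of a given other message with probability at most (2 lambda)^s. So if
  N (2 lambda)^s < (1 - 2 lambda)^s, where N is the number of sets of at most s types, every
  message owns such a set that is not contained in the decision set of any other message, and
  M <= N <= (e K / s)^s. As l/n tends to 0, K <= e n^(l(q-1)), and s of order n^(l(q-1) - gamma)
  with 0 < gamma <= mu/2 makes (e K / s)^s = 2^(o(n^(l(q-1)))) while lambda < n^(-l mu) keeps the
  separation condition, contradicting M >= 2^(R n^(l(q-1))).
\<close>

section \<open>Output types of the permutation channel\<close>

lemma perm_word_eq_permute_list: "perm_word \<sigma> x = permute_list (inv \<sigma>) x"
  by (simp add: perm_word_def permute_list_def)

lemma finite_words: "finite (words q n)"
  using finite_lists_length_eq[of "{1..q}" n] by (simp add: words_def conj_commute)

lemma perm_word_in_words: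
  assumes "\<sigma> permutes {..<n}" "x \<in> words q n"
  shows "perm_word \<sigma> x \<in> words q n"
  using assms permutes_inv[of \<sigma> "{..<n}"] by (simp add: perm_word_eq_permute_list words_def)

lemma perm_channel_sum_eq_1:
  assumes "x \<in> words q n"
  shows "(\<Sum>y\<in>words q n. perm_channel n y x) = 1"
proof -
  let ?P = "{\<sigma>. \<sigma> permutes {..<n}}"
  have "(\<Sum>y\<in>words q n. card {\<sigma>. \<sigma> permutes {..<n} \<and> y = perm_word \<sigma> x})
        = (\<Sum>y\<in>words q n. \<Sum>\<sigma>\<in>{\<sigma>\<in>?P. perm_word \<sigma> x = y}. 1)"
    by (intro sum.cong refl) (simp add: conj_commute eq_commute)
  also have "\<dots> = (\<Sum>\<sigma>\<in>?P. 1)"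
    by (rule sum.group[OF finite_permutations finite_words]) (use perm_word_in_words assms in auto)
  also have "\<dots> = fact n"
    using card_permutations[of "{..<n}" n] by simp
  finally show ?thesis
    unfolding perm_channel_def sum_divide_distrib[symmetric] of_nat_sum[symmetric] by simp
qed

lemma permute_list_eq_iff:
  assumes "p permutes {..<length y}" and "length z = length y"
  shows "permute_list p y = z \<longleftrightarrow> y = permute_list (inv p) z"
proof -
  have inv: "inv p permutes {..<length y}"
    using assms(1) by (rule permutes_inv)
  have "permute_list (inv p) (permute_list p y) = y"
    using permute_list_compose[OF inv, of p] permutes_inv_o(1)[OF assms(1)] by simp
  moreover have "permute_list p (permute_list (inv p) z) = z"
    using permute_list_compose[of p z "inv p"] assms permutes_inv_o(2)[OF assms(1)] by simp
  ultimately show ?thesis by metis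
qed

lemma perm_channel_permute_list:
  assumes p: "p permutes {..<n}" and "length y = n" and "length x = n"
  shows "perm_channel n (permute_list p y) x = perm_channel n y x"
proof -
  let ?P = "{\<sigma>. \<sigma> permutes {..<n}}"
  have shift: "permute_list p y = perm_word \<sigma> x \<longleftrightarrow> y = perm_word (p \<circ> \<sigma>) x"
    if \<sigma>: "\<sigma> permutes {..<n}" for \<sigma>
  proof -
    have "inv (p \<circ> \<sigma>) = inv \<sigma> \<circ> inv p"
      using p \<sigma> by (simp add: o_inv_distrib permutes_bij)
    then have "perm_word (p \<circ> \<sigma>) x = permute_list (inv p) (perm_word \<sigma> x)"
      using permute_list_compose[of "inv p" x "inv \<sigma>"] permutes_inv[OF p] assms
      by (simp add: perm_word_eq_permute_list)
    then show ?thesis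
      using permute_list_eq_iff[of p y "perm_word \<sigma> x"] p assms
      by (simp add: perm_word_eq_permute_list)
  qed
  have count: "card {\<sigma>. \<sigma> permutes {..<n} \<and> P \<sigma>} = (\<Sum>\<sigma>\<in>?P. if P \<sigma> then 1 else 0)" for P
    by (simp add: sum.If_cases finite_permutations Int_def conj_commute)
  have "card {\<sigma>. \<sigma> permutes {..<n} \<and> permute_list p y = perm_word \<sigma> x}
      = card {\<sigma>. \<sigma> permutes {..<n} \<and> y = perm_word (p \<circ> \<sigma>) x}"
    using shift by (intro arg_cong[where f = card] Collect_cong) blast
  also have "\<dots> = card {\<sigma>. \<sigma> permutes {..<n} \<and> y = perm_word \<sigma> x}"
    unfolding count by (rule setum_permutations_compose_left[OF p, symmetric])
  finally show ?thesis
    unfolding perm_channel_def by simp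
qed

lemma perm_channel_mset_cong:
  assumes "mset y' = mset y" and "length y = n" and "length x = n"
  shows "perm_channel n y' x = perm_channel n y x"
proof -
  obtain p where "p permutes {..<length y}" and "permute_list p y = y'"
    using mset_eq_permutation[OF assms(1)] by blast
  then show ?thesis
    using perm_channel_permute_list[of p n y x] assms by simp
qed

lemma bij_betw_PiE_blocks:
  "bij_betw (\<lambda>g. map g [0..<l]) (PiE {..<l} (\<lambda>_. words q n)) (blocks q n l)"
proof (rule bij_betw_byWitness[where f' = "\<lambda>ys. restrict (\<lambda>s. ys ! s) {..<l}"])
  show "\<forall>g\<in>PiE {..<l} (\<lambda>_. words q n). restrict (\<lambda>s. map g [0..<l] ! s) {..<l} = g"
    by (auto simp: PiE_def extensional_def fun_eq_iff)
  show "\<forall>ys\<in>blocks q n l. map (restrict (\<lambda>s. ys ! s) {..<l}) [0..<l] = ys"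
    by (auto simp: blocks_def intro!: nth_equalityI)
qed (auto simp: blocks_def PiE_def Pi_def)

lemma finite_blocks: "finite (blocks q n l)"
  using bij_betw_finite[OF bij_betw_PiE_blocks] by (simp add: finite_PiE finite_words)

lemma prod_channel_nonneg: "prod_channel n l ys xs \<ge> 0"
  unfolding prod_channel_def perm_channel_def by (intro prod_nonneg) simp

lemma prod_channel_sum_eq_1:
  assumes xs: "xs \<in> blocks q n l"
  shows "(\<Sum>ys\<in>blocks q n l. prod_channel n l ys xs) = 1"
proof -
  have "(\<Sum>ys\<in>blocks q n l. prod_channel n l ys xs)
      = (\<Sum>g\<in>PiE {..<l} (\<lambda>_. words q n). \<Prod>s<l. perm_channel n (g s) (xs ! s))"
    unfolding sum.reindex_bij_betw[OF bij_betw_PiE_blocks, symmetric] prod_channel_def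
    by (intro sum.cong refl prod.cong) auto
  also have "\<dots> = (\<Prod>s<l. \<Sum>y\<in>words q n. perm_channel n y (xs ! s))"
    by (rule prod_sum_PiE[symmetric]) (auto simp: finite_words)
  also have "\<dots> = 1"
    using xs by (intro prod.neutral ballI perm_channel_sum_eq_1) (auto simp: blocks_def)
  finally show ?thesis .
qed

lemma prod_channel_mset_cong:
  assumes "ys \<in> blocks q n l" and "ys' \<in> blocks q n l" and "xs \<in> blocks q n l"
    and "map mset ys = map mset ys'"
  shows "prod_channel n l ys xs = prod_channel n l ys' xs"
  unfolding prod_channel_def
proof (rule prod.cong[OF refl])
  fix s assume "s \<in> {..<l}"
  with assms have "mset (ys ! s) = mset (ys' ! s)"
    and "length (ys' ! s) = n" and "length (xs ! s) = n"
    by (auto simp: blocks_def words_def dest: arg_cong[where f = "\<lambda>zs. zs ! s"])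
  then show "perm_channel n (ys ! s) (xs ! s) = perm_channel n (ys' ! s) (xs ! s)"
    by (rule perm_channel_mset_cong)
qed

lemma card_mset_words_le:
  assumes "q \<ge> 1"
  shows "card (mset ` words q n) \<le> (n + 1) ^ (q - 1)"
proof -
  define counts where "counts m = restrict (count m) {1..q-1}" for m :: "nat multiset"
  have split: "{1..q} = insert q {1..q-1}" and "q \<notin> {1..q-1}"
    using assms by auto
  have total: "count (mset x) q + (\<Sum>c\<in>{1..q-1}. count (mset x) c) = n" if "x \<in> words q n" for x
  proof -
    have "(\<Sum>c\<in>{1..q}. count (mset x) c) = n"
      using sum_count_set[of x "{1..q}"] that by (simp add: words_def count_mset)
    then show ?thesis
      unfolding split using \<open>q \<notin> {1..q-1}\<close> by simp
  qed
  have "inj_on counts (mset ` words q n)"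
  proof (rule inj_onI)
    fix a b assume "a \<in> mset ` words q n" "b \<in> mset ` words q n" "counts a = counts b"
    then obtain x y where x: "x \<in> words q n" and y: "y \<in> words q n"
      and ab: "a = mset x" "b = mset y" and eq: "counts (mset x) = counts (mset y)"
      by blast
    have low: "count (mset x) c = count (mset y) c" if "c \<in> {1..q-1}" for c
      using fun_cong[OF eq, of c] that by (simp add: counts_def)
    then have "sum (count (mset x)) {1..q-1} = sum (count (mset y)) {1..q-1}"
      by (rule sum.cong[OF refl])
    then have top: "count (mset x) q = count (mset y) q"
      using total[OF x] total[OF y] by linarith
    have outside: "count (mset x) c = 0 \<and> count (mset y) c = 0" if "c \<notin> {1..q}" for c
      using x y that by (auto simp: words_def)
    show "a = b"
      unfolding ab by (rule multiset_eqI) (metis low top outside split insertE)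
  qed
  moreover have "counts ` mset ` words q n \<subseteq> PiE {1..q-1} (\<lambda>_. {0..n})"
    by (auto simp: counts_def words_def count_mset count_le_length)
  ultimately have "card (mset ` words q n) \<le> card (PiE {1..q-1} (\<lambda>_. {0..n::nat}))"
    by (metis card_image card_mono finite_PiE finite_atLeastAtMost)
  also have "\<dots> = (n + 1) ^ (q - 1)"
    by (simp add: card_PiE)
  finally show ?thesis .
qed

lemma card_map_mset_blocks_le:
  assumes "q \<ge> 1"
  shows "card (map mset ` blocks q n l) \<le> (n + 1) ^ (l * (q - 1))"
proof -
  have "map mset ` blocks q n l \<subseteq> {ts. set ts \<subseteq> mset ` words q n \<and> length ts = l}"
    by (auto simp: blocks_def)
  then have "card (map mset ` blocks q n l) \<le> card {ts. set ts \<subseteq> mset ` words q n \<and> length ts = l}"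
    by (intro card_mono finite_lists_length_eq finite_imageI finite_words)
  also have "\<dots> = card (mset ` words q n) ^ l"
    by (intro card_lists_length_eq finite_imageI finite_words)
  also have "\<dots> \<le> ((n + 1) ^ (q - 1)) ^ l"
    by (rule power_mono[OF card_mset_words_le[OF assms]]) simp
  finally show ?thesis
    by (simp add: power_mult[symmetric] mult.commute)
qed

section \<open>Separating sets of samples\<close>

lemma sum_le_sum_covering:
  fixes w :: "'a \<Rightarrow> real"
  assumes "finite A" and "finite J"
    and nonneg: "\<And>g. g \<in> A \<Longrightarrow> w g \<ge> 0" and cover: "\<And>g. g \<in> A \<Longrightarrow> \<exists>j\<in>J. C j g"
  shows "sum w A \<le> (\<Sum>j\<in>J. sum w {g\<in>A. C j g})"
proof -
  have "sum w A \<le> (\<Sum>g\<in>A. \<Sum>j\<in>J. if C j g then w g else 0)"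
  proof (rule sum_mono)
    fix g assume g: "g \<in> A"
    then obtain j where "j \<in> J" "C j g"
      using cover by blast
    then show "w g \<le> (\<Sum>j\<in>J. if C j g then w g else 0)"
      using member_le_sum[of j J "\<lambda>j. if C j g then w g else 0"] nonneg[OF g] \<open>finite J\<close>
      by simp
  qed
  also have "\<dots> = (\<Sum>j\<in>J. sum w {g\<in>A. C j g})"
    by (subst sum.swap) (simp add: sum.inter_filter \<open>finite A\<close>)
  finally show ?thesis .
qed

lemma power_sum_le_sum_power_covering:
  fixes P :: "'a \<Rightarrow> real"
  assumes "finite H" and "finite J" and nonneg: "\<And>t. t \<in> H \<Longrightarrow> P t \<ge> 0"
    and cover: "\<And>g. g \<in> PiE {..<s} (\<lambda>_. H) \<Longrightarrow> \<exists>j\<in>J. g ` {..<s} \<subseteq> C j"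
  shows "sum P H ^ s \<le> (\<Sum>j\<in>J. sum P (H \<inter> C j) ^ s)"
proof -
  define w where "w g = (\<Prod>k<s. P (g k))" for g
  have tuples: "sum w (PiE {..<s} (\<lambda>_. K)) = sum P K ^ s" if "finite K" for K
    using prod_sum_PiE[of "{..<s}" "\<lambda>_. K" "\<lambda>_. P"] that by (simp add: w_def)
  have "sum P H ^ s = sum w (PiE {..<s} (\<lambda>_. H))"
    by (rule tuples[OF \<open>finite H\<close>, symmetric])
  also have "\<dots> \<le> (\<Sum>j\<in>J. sum w {g \<in> PiE {..<s} (\<lambda>_. H). g ` {..<s} \<subseteq> C j})"
  proof (rule sum_le_sum_covering[OF _ \<open>finite J\<close> _ cover])
    show "w g \<ge> 0" if "g \<in> PiE {..<s} (\<lambda>_. H)" for g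
      using that nonneg unfolding w_def by (intro prod_nonneg) auto
  qed (simp add: finite_PiE \<open>finite H\<close>)
  also have "\<dots> = (\<Sum>j\<in>J. sum P (H \<inter> C j) ^ s)"
  proof (rule sum.cong[OF refl])
    fix j
    have "{g \<in> PiE {..<s} (\<lambda>_. H). g ` {..<s} \<subseteq> C j} = PiE {..<s} (\<lambda>_. H \<inter> C j)"
      by (auto simp: PiE_def Pi_def)
    then show "sum w {g \<in> PiE {..<s} (\<lambda>_. H). g ` {..<s} \<subseteq> C j} = sum P (H \<inter> C j) ^ s"
      using tuples \<open>finite H\<close> by simp
  qed
  finally show ?thesis .
qed

lemma exists_small_subset_separating:
  fixes T :: "'a set" and P :: "nat \<Rightarrow> 'a \<Rightarrow> real" and G :: "nat \<Rightarrow> 'a set"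
  assumes fin: "finite T"
    and nonneg: "\<And>i t. i < M \<Longrightarrow> t \<in> T \<Longrightarrow> P i t \<ge> 0"
    and sum1: "\<And>i. i < M \<Longrightarrow> sum (P i) T = 1"
    and GT: "\<And>i. i < M \<Longrightarrow> G i \<subseteq> T"
    and miss: "\<And>i. i < M \<Longrightarrow> sum (P i) (T - G i) \<le> \<delta>"
    and false_alarm: "\<And>i j. i < M \<Longrightarrow> j < M \<Longrightarrow> i \<noteq> j \<Longrightarrow> sum (P i) (G j) \<le> \<delta>"
    and "\<delta> \<le> 1"
    and small: "real (M - 1) * \<delta> ^ s < (1 - \<delta>) ^ s"
    and i: "i < M"
  shows "\<exists>S. S \<subseteq> G i \<and> card S \<le> s \<and> (\<forall>j<M. j \<noteq> i \<longrightarrow> \<not> S \<subseteq> G j)"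
proof (rule ccontr)
  assume covered: "\<not> ?thesis"
  define J where "J = {..<M} - {i}"
  have finG: "finite (G j)" if "j < M" for j
    using GT[OF that] fin finite_subset by blast
  have "(1 - \<delta>) ^ s \<le> sum (P i) (G i) ^ s"
  proof (rule power_mono)
    have "sum (P i) T = sum (P i) (G i) + sum (P i) (T - G i)"
      using fin GT[OF i] by (metis add.commute sum.subset_diff)
    then show "1 - \<delta> \<le> sum (P i) (G i)"
      using sum1[OF i] miss[OF i] by linarith
  qed (use \<open>\<delta> \<le> 1\<close> in simp)
  also have "\<dots> \<le> (\<Sum>j\<in>J. sum (P i) (G i \<inter> G j) ^ s)"
  proof (rule power_sum_le_sum_power_covering[OF finG[OF i]])
    fix g assume "g \<in> PiE {..<s} (\<lambda>_. G i)"
    then have "g ` {..<s} \<subseteq> G i" and "card (g ` {..<s}) \<le> s"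
      using card_image_le[of "{..<s}" g] by auto
    then obtain j where "j < M" "j \<noteq> i" "g ` {..<s} \<subseteq> G j"
      using covered by blast
    then show "\<exists>j\<in>J. g ` {..<s} \<subseteq> G j"
      by (auto simp: J_def)
  qed (use nonneg[OF i] GT[OF i] in \<open>auto simp: J_def\<close>)
  also have "\<dots> \<le> (\<Sum>j\<in>J. \<delta> ^ s)"
  proof (rule sum_mono)
    fix j assume "j \<in> J"
    then have j: "j < M" "j \<noteq> i"
      by (auto simp: J_def)
    have "0 \<le> sum (P i) (G i \<inter> G j)"
      using nonneg[OF i] GT[OF i] by (intro sum_nonneg) auto
    moreover have "sum (P i) (G i \<inter> G j) \<le> sum (P i) (G j)"
      using nonneg[OF i] GT[OF j(1)] finG[OF j(1)] by (intro sum_mono2) auto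
    ultimately show "sum (P i) (G i \<inter> G j) ^ s \<le> \<delta> ^ s"
      using false_alarm[OF i j(1)] j(2) by (intro power_mono) auto
  qed
  also have "\<dots> = real (M - 1) * \<delta> ^ s"
    using i by (simp add: J_def)
  finally show False
    using small by linarith
qed

lemma card_le_card_small_subsets:
  fixes T :: "'a set" and P :: "nat \<Rightarrow> 'a \<Rightarrow> real" and G :: "nat \<Rightarrow> 'a set"
  assumes fin: "finite T"
    and nonneg: "\<And>i t. i < M \<Longrightarrow> t \<in> T \<Longrightarrow> P i t \<ge> 0"
    and sum1: "\<And>i. i < M \<Longrightarrow> sum (P i) T = 1"
    and GT: "\<And>i. i < M \<Longrightarrow> G i \<subseteq> T"
    and miss: "\<And>i. i < M \<Longrightarrow> sum (P i) (T - G i) \<le> \<delta>"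
    and false_alarm: "\<And>i j. i < M \<Longrightarrow> j < M \<Longrightarrow> i \<noteq> j \<Longrightarrow> sum (P i) (G j) \<le> \<delta>"
    and "\<delta> \<le> 1"
    and small: "real (card {S. S \<subseteq> T \<and> card S \<le> s}) * \<delta> ^ s < (1 - \<delta>) ^ s"
  shows "M \<le> card {S. S \<subseteq> T \<and> card S \<le> s}"
proof (rule ccontr)
  define N where "N = card {S. S \<subseteq> T \<and> card S \<le> s}"
  assume "\<not> M \<le> card {S. S \<subseteq> T \<and> card S \<le> s}"
  then have lt: "i < M" if "i < N + 1" for i
    using that by (simp add: N_def)
  define F where
    "F i = (SOME S. S \<subseteq> G i \<and> card S \<le> s \<and> (\<forall>j<N+1. j \<noteq> i \<longrightarrow> \<not> S \<subseteq> G j))" for i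
  have F: "F i \<subseteq> G i \<and> card (F i) \<le> s \<and> (\<forall>j<N+1. j \<noteq> i \<longrightarrow> \<not> F i \<subseteq> G j)"
    if "i < N + 1" for i
    unfolding F_def
  proof (rule someI_ex, rule exists_small_subset_separating[where M = "N + 1" and T = T and P = P])
    show "real (N + 1 - 1) * \<delta> ^ s < (1 - \<delta>) ^ s"
      using small by (simp add: N_def)
  qed (use fin nonneg[OF lt] sum1[OF lt] GT[OF lt] miss[OF lt] false_alarm[OF lt lt] \<open>\<delta> \<le> 1\<close> that
       in \<open>blast+\<close>)
  have "inj_on F {..<N+1}"
  proof (rule inj_onI)
    fix i j assume "i \<in> {..<N+1}" "j \<in> {..<N+1}" "F i = F j"
    then show "i = j"
      using F[of i] F[of j] by (cases "i = j") auto
  qed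
  moreover have "F ` {..<N+1} \<subseteq> {S. S \<subseteq> T \<and> card S \<le> s}"
    using F GT[OF lt] by blast
  ultimately have "card {..<N+1} \<le> N"
    unfolding N_def by (rule card_inj_on_le) (simp add: fin)
  then show False
    by simp
qed

section \<open>Identification codes on types\<close>

lemma sum_fibres_le_twice_sum:
  fixes p :: "'a \<Rightarrow> real" and \<tau> :: "'a \<Rightarrow> 'b"
  assumes "finite B" and "E \<subseteq> B" and "finite A"
    and nonneg: "\<And>y. y \<in> B \<Longrightarrow> p y \<ge> 0"
    and const: "\<And>y y'. y \<in> B \<Longrightarrow> y' \<in> B \<Longrightarrow> \<tau> y = \<tau> y' \<Longrightarrow> p y = p y'"
    and majority: "\<And>t. t \<in> A \<Longrightarrow> card {y\<in>B. \<tau> y = t} \<le> 2 * card ({y\<in>B. \<tau> y = t} \<inter> E)"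
  shows "(\<Sum>t\<in>A. sum p {y\<in>B. \<tau> y = t}) \<le> 2 * sum p E"
proof -
  have "sum p {y\<in>B. \<tau> y = t} \<le> 2 * sum p ({y\<in>B. \<tau> y = t} \<inter> E)" if "t \<in> A" for t
  proof (cases "{y\<in>B. \<tau> y = t} = {}")
    case False
    then obtain y0 where y0: "y0 \<in> B" "\<tau> y0 = t"
      by blast
    have on_fibre: "sum p H = card H * p y0" if "H \<subseteq> {y\<in>B. \<tau> y = t}" for H
    proof -
      have "sum p H = sum (\<lambda>_. p y0) H"
        using that const[OF _ y0(1)] y0(2) by (intro sum.cong) auto
      then show ?thesis
        by simp
    qed
    have "real (card {y\<in>B. \<tau> y = t}) * p y0 \<le> 2 * real (card ({y\<in>B. \<tau> y = t} \<inter> E)) * p y0"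
      using majority[OF that] nonneg[OF y0(1)] by (intro mult_right_mono) linarith+
    then show ?thesis
      by (simp add: on_fibre mult.assoc)
  next
    case True
    then show ?thesis
      unfolding True by simp
  qed
  then have "(\<Sum>t\<in>A. sum p {y\<in>B. \<tau> y = t}) \<le> 2 * (\<Sum>t\<in>A. sum p ({y\<in>B. \<tau> y = t} \<inter> E))"
    by (simp add: sum_distrib_left sum_mono)
  also have "(\<Sum>t\<in>A. sum p ({y\<in>B. \<tau> y = t} \<inter> E)) = (\<Sum>t\<in>A. sum p {y\<in>{y\<in>E. \<tau> y \<in> A}. \<tau> y = t})"
    using \<open>E \<subseteq> B\<close> by (intro sum.cong refl arg_cong[where f = "sum p"]) auto
  also have "\<dots> = sum p {y\<in>E. \<tau> y \<in> A}"
    using \<open>finite A\<close> \<open>finite B\<close> \<open>E \<subseteq> B\<close> by (intro sum.group) (auto intro: finite_subset)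
  also have "\<dots> \<le> sum p E"
    using \<open>finite B\<close> \<open>E \<subseteq> B\<close> nonneg by (intro sum_mono2) (auto intro: finite_subset)
  finally show ?thesis
    by simp
qed

lemma card_le_double_card_Diff:
  assumes "finite F" and "\<not> card F \<le> 2 * card (F \<inter> E)"
  shows "card F \<le> 2 * card (F - E)"
  using assms card_Diff_subset_Int[of F E] card_mono[of F "F \<inter> E"] by simp

definition output_prob :: "nat \<Rightarrow> nat \<Rightarrow> nat \<Rightarrow> (nat list list \<Rightarrow> real) \<Rightarrow> nat list list \<Rightarrow> real" where
  "output_prob q n l P ys = (\<Sum>xs\<in>blocks q n l. P xs * prod_channel n l ys xs)"

lemma sum_output_prob:
  "sum (output_prob q n l P) E = (\<Sum>xs\<in>blocks q n l. P xs * (\<Sum>ys\<in>E. prod_channel n l ys xs))"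
  unfolding output_prob_def sum_distrib_left by (rule sum.swap)

lemma output_prob_nonneg:
  assumes "\<And>xs. xs \<in> blocks q n l \<Longrightarrow> P xs \<ge> 0"
  shows "output_prob q n l P ys \<ge> 0"
  unfolding output_prob_def using assms prod_channel_nonneg by (intro sum_nonneg mult_nonneg_nonneg)

lemma sum_output_prob_blocks:
  assumes "sum P (blocks q n l) = 1"
  shows "sum (output_prob q n l P) (blocks q n l) = 1"
  using assms by (simp add: sum_output_prob prod_channel_sum_eq_1)

lemma output_prob_mset_cong:
  assumes "ys \<in> blocks q n l" and "ys' \<in> blocks q n l" and "map mset ys = map mset ys'"
  shows "output_prob q n l P ys = output_prob q n l P ys'"
  unfolding output_prob_def using assms prod_channel_mset_cong[of ys q n l ys'] by simp

lemma err_not_to_le_type1_err: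
  assumes "i < M"
  shows "err_not_to q n l Q D i \<le> type1_err q n l M Q D"
  unfolding type1_err_def
proof (rule Max_ge)
  have "{err_not_to q n l Q D i | i. i < M} = (\<lambda>i. err_not_to q n l Q D i) ` {..<M}"
    by auto
  then show "finite {err_not_to q n l Q D i | i. i < M}"
    by simp
qed (use assms in blast)

lemma err_to_le_type2_err:
  assumes "i < M" and "j < M" and "i \<noteq> j"
  shows "err_to q n l Q D i j \<le> type2_err q n l M Q D"
  unfolding type2_err_def
proof (rule Max_ge)
  have "{err_to q n l Q D i j | i j. i < M \<and> j < M \<and> i \<noteq> j}
        \<subseteq> (\<lambda>(i, j). err_to q n l Q D i j) ` ({..<M} \<times> {..<M})"
    by auto
  then show "finite {err_to q n l Q D i j | i j. i < M \<and> j < M \<and> i \<noteq> j}"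
    by (rule finite_subset) simp
qed (use assms in blast)

definition block_type_class :: "nat \<Rightarrow> nat \<Rightarrow> nat \<Rightarrow> nat multiset list \<Rightarrow> nat list list set" where
  "block_type_class q n l t = {ys \<in> blocks q n l. map mset ys = t}"

lemma sum_block_type_classes:
  "(\<Sum>t\<in>map mset ` blocks q n l. sum f (block_type_class q n l t)) = sum f (blocks q n l)"
  unfolding block_type_class_def by (intro sum.group) (auto simp: finite_blocks)

lemma sum_block_type_classes_output_prob_le:
  assumes nonneg: "\<And>xs. xs \<in> blocks q n l \<Longrightarrow> P xs \<ge> 0"
    and "E \<subseteq> blocks q n l" and "H \<subseteq> map mset ` blocks q n l"
    and "\<And>t. t \<in> H \<Longrightarrow> card (block_type_class q n l t) \<le> 2 * card (block_type_class q n l t \<inter> E)"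
  shows "(\<Sum>t\<in>H. sum (output_prob q n l P) (block_type_class q n l t)) \<le> 2 * sum (output_prob q n l P) E"
  unfolding block_type_class_def
proof (rule sum_fibres_le_twice_sum[OF finite_blocks \<open>E \<subseteq> blocks q n l\<close>])
  show "finite H"
    using \<open>H \<subseteq> map mset ` blocks q n l\<close> by (rule finite_subset) (simp add: finite_blocks)
  show "output_prob q n l P ys \<ge> 0" for ys
    using nonneg by (rule output_prob_nonneg)
  show "output_prob q n l P ys = output_prob q n l P ys'"
    if "ys \<in> blocks q n l" "ys' \<in> blocks q n l" "map mset ys = map mset ys'" for ys ys'
    using that by (rule output_prob_mset_cong)
qed (use assms(4) in \<open>simp add: block_type_class_def\<close>)

lemma ID_code_card_le:
  assumes code: "is_ID_code q n l M Q D"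
    and type1: "type1_err q n l M Q D \<le> \<epsilon>" and type2: "type2_err q n l M Q D \<le> \<epsilon>"
    and "2 * \<epsilon> \<le> 1"
    and small: "real (card {S. S \<subseteq> map mset ` blocks q n l \<and> card S \<le> s}) * (2 * \<epsilon>) ^ s
                  < (1 - 2 * \<epsilon>) ^ s"
  shows "M \<le> card {S. S \<subseteq> map mset ` blocks q n l \<and> card S \<le> s}"
proof -
  define B where "B = blocks q n l"
  define F where "F = block_type_class q n l"
  define p where "p i = output_prob q n l (Q i)" for i
  define G where "G j = {t \<in> map mset ` B. card (F t) \<le> 2 * card (F t \<inter> D j)}" for j
  have Q: "\<And>xs. xs \<in> B \<Longrightarrow> Q i xs \<ge> 0" "sum (Q i) B = 1" "D i \<subseteq> B" if "i < M" for i
    using code that by (auto simp: is_ID_code_def B_def)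
  show ?thesis
  proof (rule card_le_card_small_subsets[where P = "\<lambda>i t. sum (p i) (F t)" and G = G])
    show "(\<Sum>t\<in>map mset ` blocks q n l. sum (p i) (F t)) = 1" if "i < M" for i
      using Q(2)[OF that] by (simp add: F_def p_def B_def sum_block_type_classes sum_output_prob_blocks)
    show "(\<Sum>t\<in>map mset ` blocks q n l - G i. sum (p i) (F t)) \<le> 2 * \<epsilon>" if "i < M" for i
    proof -
      have "(\<Sum>t\<in>map mset ` B - G i. sum (p i) (F t)) \<le> 2 * sum (p i) (B - D i)"
        unfolding p_def F_def B_def
      proof (rule sum_block_type_classes_output_prob_le[OF Q(1)[OF that, unfolded B_def]])
        fix t assume "t \<in> map mset ` blocks q n l - G i"
        then have "card (F t) \<le> 2 * card (F t - D i)"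
          using finite_blocks by (intro card_le_double_card_Diff) (auto simp: G_def F_def B_def block_type_class_def)
        moreover have "F t \<inter> (B - D i) = F t - D i"
          by (auto simp: F_def B_def block_type_class_def)
        ultimately show "card (block_type_class q n l t) \<le> 2 * card (block_type_class q n l t \<inter> (blocks q n l - D i))"
          by (simp add: F_def B_def)
      qed auto
      then show ?thesis
        using err_not_to_le_type1_err[OF that, of q n l Q D] type1
        by (simp add: p_def B_def err_not_to_def sum_output_prob)
    qed
    show "(\<Sum>t\<in>G j. sum (p i) (F t)) \<le> 2 * \<epsilon>" if "i < M" "j < M" "i \<noteq> j" for i j
    proof -
      have "(\<Sum>t\<in>G j. sum (p i) (F t)) \<le> 2 * sum (p i) (D j)"
        unfolding p_def F_def using Q(1)[OF that(1)] Q(3)[OF that(2)]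
        by (intro sum_block_type_classes_output_prob_le) (auto simp: G_def F_def B_def)
      then show ?thesis
        using err_to_le_type2_err[OF that, of q n l Q D] type2
        by (simp add: p_def err_to_def sum_output_prob)
    qed
  qed (use \<open>2 * \<epsilon> \<le> 1\<close> small Q(1) in
      \<open>auto simp: G_def B_def finite_blocks p_def intro: sum_nonneg output_prob_nonneg\<close>)
qed

section \<open>Counting and asymptotics\<close>

lemma card_small_subsets_le:
  assumes "finite T" and "card T \<le> K" and "1 \<le> s" and "s \<le> K"
  shows "real (card {S. S \<subseteq> T \<and> card S \<le> s}) \<le> (exp 1 * real K / real s) ^ s"
proof -
  define N where "N = card T"
  define t where "t = real s / real K"
  have t: "0 < t" "t \<le> 1"
    using assms by (auto simp: t_def)
  have "{S. S \<subseteq> T \<and> card S \<le> s} = (\<Union>k\<le>s. {S. S \<subseteq> T \<and> card S = k})"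
    by auto
  then have "card {S. S \<subseteq> T \<and> card S \<le> s} \<le> (\<Sum>k\<le>s. N choose k)"
    using card_UN_le[of "{..s}" "\<lambda>k. {S. S \<subseteq> T \<and> card S = k}"] n_subsets[OF assms(1)]
    by (simp add: N_def)
  then have "real (card {S. S \<subseteq> T \<and> card S \<le> s}) \<le> (\<Sum>k\<le>s. real (N choose k))"
    by (metis of_nat_le_iff of_nat_sum)
  then have "t ^ s * card {S. S \<subseteq> T \<and> card S \<le> s} \<le> (\<Sum>k\<le>s. t ^ s * (N choose k))"
    using t by (simp add: mult_left_mono flip: sum_distrib_left)
  also have "\<dots> \<le> (\<Sum>k\<le>s + N. (N choose k) * t ^ k)"
  proof -
    have "(\<Sum>k\<le>s. t ^ s * (N choose k)) \<le> (\<Sum>k\<le>s. (N choose k) * t ^ k)"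
      using t by (intro sum_mono) (simp add: power_decreasing mult.commute mult_right_mono)
    also have "\<dots> \<le> (\<Sum>k\<le>s + N. (N choose k) * t ^ k)"
      using t by (intro sum_mono2) auto
    finally show ?thesis .
  qed
  also have "\<dots> = (\<Sum>k\<le>N. (N choose k) * t ^ k)"
    by (rule sum.mono_neutral_right) auto
  also have "\<dots> = (t + 1) ^ N"
    by (simp add: binomial_ring)
  also have "\<dots> \<le> (t + 1) ^ K"
    using t assms(2) by (intro power_increasing) (auto simp: N_def)
  also have "\<dots> \<le> exp t ^ K"
    using t exp_ge_add_one_self[of t] by (intro power_mono) (auto simp: add.commute)
  also have "\<dots> = exp 1 ^ s"
    using assms by (simp add: t_def flip: exp_of_nat_mult)
  finally have "real (card {S. S \<subseteq> T \<and> card S \<le> s}) \<le> exp 1 ^ s / t ^ s"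
    using t by (simp add: field_simps)
  also have "\<dots> = (exp 1 * real K / real s) ^ s"
    using t by (simp add: t_def power_divide field_simps)
  finally show ?thesis .
qed

lemma nat_floor_bounds:
  fixes y :: real
  assumes "1 \<le> y"
  shows "1 \<le> nat \<lfloor>y\<rfloor>" and "real (nat \<lfloor>y\<rfloor>) \<le> y" and "y \<le> 2 * real (nat \<lfloor>y\<rfloor>)"
proof -
  have fl: "real (nat \<lfloor>y\<rfloor>) = of_int \<lfloor>y\<rfloor>"
    using assms by simp
  have "1 \<le> real (nat \<lfloor>y\<rfloor>)"
    using assms unfolding fl by simp
  then show "1 \<le> nat \<lfloor>y\<rfloor>"
    by simp
  show "real (nat \<lfloor>y\<rfloor>) \<le> y" and "y \<le> 2 * real (nat \<lfloor>y\<rfloor>)"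
    using floor_correct[of y] \<open>1 \<le> real (nat \<lfloor>y\<rfloor>)\<close> unfolding fl by linarith+
qed

lemma power_add_1_le_exp:
  fixes a y z :: real
  assumes "0 \<le> a" and "a \<le> y" and "1 \<le> y" and "1 \<le> s" and "real s * ln (2 * y) \<le> z"
  shows "a ^ s + 1 \<le> exp z"
proof -
  have "a ^ s \<le> y ^ s"
    using assms(2,1) by (rule power_mono)
  moreover have "1 \<le> y ^ s"
    using assms(3) by (rule one_le_power)
  ultimately have "a ^ s + 1 \<le> 2 * y ^ s"
    by linarith
  also have "\<dots> \<le> 2 ^ s * y ^ s"
    using power_increasing[OF assms(4), of "2::real"] \<open>1 \<le> y ^ s\<close> by (intro mult_right_mono) auto
  also have "\<dots> = (2 * y) ^ s"
    by (rule power_mult_distrib[symmetric])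
  also have "\<dots> = exp (real s * ln (2 * y))"
    using assms(3) by (subst exp_of_nat_mult) simp
  also have "\<dots> \<le> exp z"
    using assms(5) by simp
  finally show ?thesis .
qed

text \<open>The choice s = floor (x / B) gives e K / s <= 2 e^2 B: the bound on delta then yields the
  separation inequality, and the bound on ln (4 e^2 B) yields (e K / s)^s + 1 <= exp (c x).\<close>

lemma exists_subset_size:
  fixes x B \<delta> c :: real and K :: nat
  assumes B: "1 \<le> B" "B \<le> x" and K: "x \<le> real K" "real K \<le> exp 1 * x"
    and \<delta>: "0 \<le> \<delta>" "8 * exp 1 ^ 2 * B * \<delta> \<le> 1"
    and c: "ln (4 * exp 1 ^ 2 * B) \<le> c * B"
  shows "\<exists>s. 1 \<le> s \<and> s \<le> K \<and> (exp 1 * real K / real s * \<delta>) ^ s < (1 - \<delta>) ^ s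
           \<and> (exp 1 * real K / real s) ^ s + 1 \<le> exp (c * x)"
proof -
  define s where "s = nat \<lfloor>x / B\<rfloor>"
  define a where "a = exp 1 * real K / real s"
  define y where "y = 2 * exp 1 ^ 2 * B"
  have "x / B \<ge> 1"
    using B by simp
  then have s: "1 \<le> s" "real s \<le> x / B" "x / B \<le> 2 * real s"
    unfolding s_def by (rule nat_floor_bounds)+
  moreover have "x / B \<le> x"
    using B by (simp add: divide_le_eq mult_le_cancel_left1)
  ultimately have "s \<le> K"
    using K by linarith
  have "a \<le> exp 1 * (exp 1 * x) / real s"
    using K s by (simp add: a_def divide_right_mono)
  also have "\<dots> = exp 1 ^ 2 * (x / real s)"
    by (simp add: power2_eq_square)
  also have "\<dots> \<le> exp 1 ^ 2 * (2 * B)"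
    using s B by (intro mult_left_mono) (simp_all add: field_simps)
  finally have a: "0 \<le> a" "a \<le> y"
    by (simp_all add: a_def y_def)
  have eB: "1 \<le> exp 1 ^ 2 * B"
    using mult_mono[of 1 "exp 1 ^ 2" 1 B] B by (simp add: one_le_power)
  have "\<delta> \<le> exp 1 ^ 2 * B * \<delta>"
    using mult_right_mono[OF eB \<delta>(1)] by simp
  then have "a * \<delta> < 1 - \<delta>"
    using mult_right_mono[OF a(2) \<delta>(1)] \<delta>(2) by (simp add: y_def)
  then have "(a * \<delta>) ^ s < (1 - \<delta>) ^ s"
    using a \<delta>(1) s(1) by (intro power_strict_mono) auto
  moreover have "a ^ s + 1 \<le> exp (c * x)"
  proof (rule power_add_1_le_exp[OF a _ s(1)])
    show "1 \<le> y"
      using eB by (simp add: y_def)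
    have "0 \<le> ln (2 * y)" and "ln (2 * y) \<le> c * B"
      using eB c by (simp_all add: y_def mult.assoc)
    then have "real s * ln (2 * y) \<le> x / B * (c * B)"
      using s by (intro mult_mono) simp_all
    then show "real s * ln (2 * y) \<le> c * x"
      using B by (simp add: mult.commute)
  qed
  ultimately show ?thesis
    using s(1) \<open>s \<le> K\<close> unfolding a_def by blast
qed

lemma Suc_power_le_exp_1_mult_power:
  assumes "1 \<le> n" and "m \<le> n"
  shows "real ((n + 1) ^ m) \<le> exp 1 * real n ^ m"
proof -
  have "real ((n + 1) ^ m) = real n ^ m * (1 + 1 / real n) ^ m"
    using assms by (simp add: field_simps flip: power_mult_distrib)
  also have "\<dots> \<le> real n ^ m * exp (1 / real n) ^ m"
    by (intro mult_left_mono power_mono) (auto simp: add.commute exp_ge_add_one_self)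
  also have "\<dots> = real n ^ m * exp (real m / real n)"
    by (simp flip: exp_of_nat_mult)
  also have "\<dots> \<le> real n ^ m * exp 1"
    using assms by (intro mult_left_mono) simp_all
  finally show ?thesis
    by (simp add: mult.commute)
qed

lemma powr_mult_powr_le:
  fixes n l \<gamma> \<mu> :: real
  assumes "1 \<le> n" and "1 \<le> l" and "0 \<le> \<mu>" and "\<gamma> \<le> \<mu> / 2"
  shows "n powr \<gamma> * n powr (- (l * \<mu>)) \<le> n powr (- (\<mu> / 2))"
proof -
  have "1 * \<mu> \<le> l * \<mu>"
    using assms by (intro mult_right_mono) auto
  then show ?thesis
    using assms by (simp add: powr_add[symmetric] powr_mono)
qed

lemma exists_subset_size_for_blocks:
  fixes \<gamma> \<mu> R :: real
  assumes \<gamma>: "0 < \<gamma>" "\<gamma> \<le> \<mu> / 2" "\<gamma> \<le> 1" and n: "1 \<le> n" "1 \<le> l" "1 \<le> m" "m \<le> n"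
    and small_error: "16 * exp 1 ^ 2 * real n powr (- (\<mu> / 2)) \<le> 1"
    and large_rate: "ln (4 * exp 1 ^ 2 * real n powr \<gamma>) \<le> R * ln 2 * real n powr \<gamma>"
  defines "\<delta> \<equiv> 2 * real n powr (- (real l * \<mu>))" and "K \<equiv> (n + 1) ^ m"
  shows "\<delta> \<le> 1 \<and> (\<exists>s. 1 \<le> s \<and> s \<le> K \<and> (exp 1 * real K / real s * \<delta>) ^ s < (1 - \<delta>) ^ s
           \<and> (exp 1 * real K / real s) ^ s + 1 \<le> 2 powr (R * real n ^ m))"
proof
  define B where "B = real n powr \<gamma>"
  have B: "1 \<le> B" "B \<le> real n ^ m"
  proof -
    show "1 \<le> B"
      using n \<gamma> by (simp add: B_def ge_one_powr_ge_zero)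
    have "B \<le> real n powr 1"
      using n \<gamma> unfolding B_def by (intro powr_mono) auto
    also have "\<dots> \<le> real n ^ m"
      using n by (simp add: self_le_power)
    finally show "B \<le> real n ^ m" .
  qed
  have K: "real n ^ m \<le> real K" "real K \<le> exp 1 * real n ^ m"
    using n Suc_power_le_exp_1_mult_power[of n m] by (simp_all add: K_def power_mono)
  have B\<delta>: "B * \<delta> \<le> 2 * real n powr (- (\<mu> / 2))"
    using powr_mult_powr_le[where n = "real n" and l = "real l" and \<gamma> = \<gamma> and \<mu> = \<mu>] n \<gamma>
    by (simp add: B_def \<delta>_def)
  moreover have "\<delta> \<le> B * \<delta>"
    using mult_right_mono[OF B(1), of \<delta>] by (simp add: \<delta>_def)
  moreover have "16 * real n powr (- (\<mu> / 2)) \<le> 16 * exp 1 ^ 2 * real n powr (- (\<mu> / 2))"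
    by (intro mult_right_mono) (auto simp: one_le_power)
  ultimately show "\<delta> \<le> 1"
    using small_error by linarith
  have "8 * exp 1 ^ 2 * B * \<delta> = 8 * exp 1 ^ 2 * (B * \<delta>)"
    by simp
  also have "\<dots> \<le> 8 * exp 1 ^ 2 * (2 * real n powr (- (\<mu> / 2)))"
    using B\<delta> by (rule mult_left_mono) simp
  also have "\<dots> \<le> 1"
    using small_error by simp
  finally have "8 * exp 1 ^ 2 * B * \<delta> \<le> 1" .
  moreover have "exp (R * ln 2 * real n ^ m) = 2 powr (R * real n ^ m)"
    by (simp add: powr_def mult_ac)
  ultimately show "\<exists>s. 1 \<le> s \<and> s \<le> K \<and> (exp 1 * real K / real s * \<delta>) ^ s < (1 - \<delta>) ^ s
           \<and> (exp 1 * real K / real s) ^ s + 1 \<le> 2 powr (R * real n ^ m)"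
    using exists_subset_size[OF B K _ _ large_rate[folded B_def]] by (simp add: \<delta>_def)
qed

lemma ID_code_messages_lt:
  fixes \<gamma> \<mu> R :: real
  assumes q: "q \<ge> 2" and \<gamma>: "0 < \<gamma>" "\<gamma> \<le> \<mu> / 2" "\<gamma> \<le> 1" and n: "1 \<le> n" "l * (q - 1) \<le> n"
    and small_error: "16 * exp 1 ^ 2 * real n powr (- (\<mu> / 2)) \<le> 1"
    and large_rate: "ln (4 * exp 1 ^ 2 * real n powr \<gamma>) \<le> R * ln 2 * real n powr \<gamma>"
    and code: "is_ID_code q n l M Q D"
    and type1: "type1_err q n l M Q D < real n powr (- (real l * \<mu>))"
    and type2: "type2_err q n l M Q D < real n powr (- (real l * \<mu>))"
  shows "real M < 2 powr (R * real n ^ (l * (q - 1)))"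
proof -
  define \<epsilon> where "\<epsilon> = real n powr (- (real l * \<mu>))"
  define K where "K = (n + 1) ^ (l * (q - 1))"
  define N where "N s = card {S. S \<subseteq> map mset ` blocks q n l \<and> card S \<le> s}" for s
  have "1 \<le> l"
    using code by (simp add: is_ID_code_def)
  then have "1 \<le> l * (q - 1)"
    using q by simp
  then have "2 * \<epsilon> \<le> 1 \<and> (\<exists>s. 1 \<le> s \<and> s \<le> K \<and>
      (exp 1 * real K / real s * (2 * \<epsilon>)) ^ s < (1 - 2 * \<epsilon>) ^ s \<and>
      (exp 1 * real K / real s) ^ s + 1 \<le> 2 powr (R * real n ^ (l * (q - 1))))"
    unfolding \<epsilon>_def K_def
    by (rule exists_subset_size_for_blocks[OF \<gamma> n(1) \<open>1 \<le> l\<close> _ n(2) small_error large_rate])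
  then obtain s where "2 * \<epsilon> \<le> 1" and s: "1 \<le> s" "s \<le> K"
    and separating: "(exp 1 * real K / real s * (2 * \<epsilon>)) ^ s < (1 - 2 * \<epsilon>) ^ s"
    and count: "(exp 1 * real K / real s) ^ s + 1 \<le> 2 powr (R * real n ^ (l * (q - 1)))"
    by blast
  have N: "real (N s) \<le> (exp 1 * real K / real s) ^ s"
    unfolding N_def using s card_map_mset_blocks_le[of q n l] q
    by (intro card_small_subsets_le) (simp_all add: finite_blocks K_def)
  then have "real (N s) * (2 * \<epsilon>) ^ s \<le> (exp 1 * real K / real s) ^ s * (2 * \<epsilon>) ^ s"
    by (rule mult_right_mono) (simp add: \<epsilon>_def)
  also have "\<dots> = (exp 1 * real K / real s * (2 * \<epsilon>)) ^ s"
    by (rule power_mult_distrib[symmetric])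
  finally have small: "real (N s) * (2 * \<epsilon>) ^ s < (1 - 2 * \<epsilon>) ^ s"
    using separating by linarith
  have "type1_err q n l M Q D \<le> \<epsilon>" and "type2_err q n l M Q D \<le> \<epsilon>"
    using type1 type2 by (simp_all add: \<epsilon>_def)
  then have "M \<le> N s"
    using ID_code_card_le[OF code _ _ \<open>2 * \<epsilon> \<le> 1\<close> small[unfolded N_def]] by (simp add: N_def)
  then show ?thesis
    using N count by linarith
qed

lemma eventually_mult_le_of_ratio_tendsto_0:
  assumes "(\<lambda>i. real (l i) / real (n i)) \<longlonglongrightarrow> 0" and "filterlim n at_top sequentially"
  shows "eventually (\<lambda>i. l i * c \<le> n i) sequentially"
proof -
  have "eventually (\<lambda>i. real (l i) / real (n i) < 1 / real (c + 1)) sequentially"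
    by (rule order_tendstoD(2)[OF assms(1)]) simp
  moreover have "eventually (\<lambda>i. 1 \<le> n i) sequentially"
    using assms(2) by (simp add: filterlim_at_top)
  ultimately show ?thesis
  proof eventually_elim
    case (elim i)
    then have "real (l i * (c + 1)) < real (n i)"
      by (simp add: field_simps)
    then have "l i * c + l i < n i"
      by (simp only: of_nat_less_iff distrib_left mult_1_right)
    then show ?case
      by simp
  qed
qed

lemma eventually_ID_code_messages_lt:
  fixes \<mu> R :: real
  assumes q: "q \<ge> 2" and "0 < \<mu>" and "0 < R"
    and n: "filterlim n at_top sequentially" and l: "(\<lambda>i. real (l i) / real (n i)) \<longlonglongrightarrow> 0"
  shows "eventually (\<lambda>i. \<forall>M Q D. is_ID_code q (n i) (l i) M Q D \<and>
      type1_err q (n i) (l i) M Q D < real (n i) powr (- (real (l i) * \<mu>)) \<and>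
      type2_err q (n i) (l i) M Q D < real (n i) powr (- (real (l i) * \<mu>)) \<longrightarrow>
      real M < 2 powr (R * real (n i) ^ (l i * (q - 1)))) sequentially"
proof -
  define \<gamma> where "\<gamma> = min \<mu> 1 / 2"
  have \<gamma>: "0 < \<gamma>" "\<gamma> \<le> \<mu> / 2" "\<gamma> \<le> 1"
    using assms by (auto simp: \<gamma>_def)
  have "eventually (\<lambda>y::real. 16 * exp 1 ^ 2 * y powr (- (\<mu> / 2)) \<le> 1) at_top"
    and "eventually (\<lambda>y::real. ln (4 * exp 1 ^ 2 * y powr \<gamma>) \<le> R * ln 2 * y powr \<gamma>) at_top"
    using assms \<gamma> by real_asymp+
  then have "eventually (\<lambda>i. 16 * exp 1 ^ 2 * real (n i) powr (- (\<mu> / 2)) \<le> 1 \<and>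
      ln (4 * exp 1 ^ 2 * real (n i) powr \<gamma>) \<le> R * ln 2 * real (n i) powr \<gamma>) sequentially"
    by (intro eventually_compose_filterlim[OF _ filterlim_compose[OF filterlim_real_sequentially n]]
          eventually_conj)
  moreover have "eventually (\<lambda>i. 1 \<le> n i) sequentially"
    using n by (simp add: filterlim_at_top)
  moreover have "eventually (\<lambda>i. l i * (q - 1) \<le> n i) sequentially"
    using l n by (rule eventually_mult_le_of_ratio_tendsto_0)
  ultimately show ?thesis
    by eventually_elim (use ID_code_messages_lt[OF q \<gamma>] in blast)
qed

theorem theorem2:
  fixes q :: nat and \<mu> R :: real
  assumes "q \<ge> 2" and "\<mu> > 0" and "R > 0"
  shows "\<not> (\<exists>(n :: nat \<Rightarrow> nat) (l :: nat \<Rightarrow> nat) (M :: nat \<Rightarrow> nat)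
              (Q :: nat \<Rightarrow> nat \<Rightarrow> nat list list \<Rightarrow> real) (D :: nat \<Rightarrow> nat \<Rightarrow> nat list list set).
     filterlim n at_top sequentially \<and>
     (\<lambda>i. real (l i) / real (n i)) \<longlonglongrightarrow> 0 \<and>
     (\<forall>i. is_ID_code q (n i) (l i) (M i) (Q i) (D i) \<and>
          real (M i) \<ge> 2 powr (R * real (n i) ^ (l i * (q - 1))) \<and>
          type1_err q (n i) (l i) (M i) (Q i) (D i) < real (n i) powr (- (real (l i) * \<mu>)) \<and>
          type2_err q (n i) (l i) (M i) (Q i) (D i) < real (n i) powr (- (real (l i) * \<mu>))))"
proof (intro notI, elim exE conjE)
  fix n l M Q D
  assume n: "filterlim n at_top sequentially" and l: "(\<lambda>i. real (l i) / real (n i)) \<longlonglongrightarrow> 0"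
    and codes: "\<forall>i. is_ID_code q (n i) (l i) (M i) (Q i) (D i) \<and>
          real (M i) \<ge> 2 powr (R * real (n i) ^ (l i * (q - 1))) \<and>
          type1_err q (n i) (l i) (M i) (Q i) (D i) < real (n i) powr (- (real (l i) * \<mu>)) \<and>
          type2_err q (n i) (l i) (M i) (Q i) (D i) < real (n i) powr (- (real (l i) * \<mu>))"
  show False
    using eventually_ID_code_messages_lt[OF assms n l] codes
    unfolding eventually_sequentially by (meson le_refl not_less)
qed

end
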